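(* Let $q(z)$ be a mixing distribution and $q_\phi(x|z)$ a conditional density on $\mathbb{R}^d$ with tractable score $s_{q_\phi(\cdot|z)}(x)=\nabla_x\log q_\phi(x|z)$, and let $q_\phi(x)=\int q_\phi(x|z)q(z)\,\mathrm{d}z$, $q_\phi(x,z)=q_\phi(x|z)q(z)$. Let $p$ be a target density on $\mathbb{R}^d$ with score $s_p=\nabla\log p$, and $k$ a continuous positive semi-definite kernel on $\mathbb{R}^d$ with RKHS $\mathcal{H}_0$, $\mathcal{H}=\mathcal{H}_0^{\otimes d}$. Then the maximizer $f^*(x)=\mathbb{E}_{q_\phi(y)}k(x,y)[s_p(y)-s_{q_\phi}(y)]$ of $f\mapsto \mathbb{E}_{q_\phi(x)}[2f(x)^\top(s_p(x)-s_{q_\phi}(x))]-\|f\|_{\mathcal{H}}^2$ over $\mathcal{H}$ can be rewritten as $$f^*(x)=\mathbb{E}_{q_\phi(y,z)}\,k(x,y)\big[s_p(y)-s_{q_\phi(\cdot|z)}(y)\big],$$ and $$\mathrm{KSD}(q_\phi\|p)^2=\mathbb{E}_{q_\phi(x,z),\,q_\phi(x',z')}\Big[k(x,x')\big\langle s_p(x)-s_{q_\phi(\cdot|z)}(x),\ s_p(x')-s_{q_\phi(\cdot|z')}(x')\big\rangle\Big],$$ where $(x,z)$ and $(x',z')$ are independent draws from $q_\phi(x,z)$.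
   Context: $s_{q_\phi}=\nabla\log q_\phi$ is the (generally intractable) marginal score. The kernel Stein discrepancy is $\mathrm{KSD}(q\|p)^2=\mathbb{E}_{x,y\sim q}\big[(s_p(x)-s_q(x))^\top k(x,y)(s_p(y)-s_q(y))\big]$. *)

theory Defs
  imports "HOL-Analysis.Analysis"
begin

definition has_score :: "('a::euclidean_space \<Rightarrow> real) \<Rightarrow> ('a \<Rightarrow> 'a) \<Rightarrow> bool" where
  "has_score f s \<longleftrightarrow>
     (\<forall>x. f x > 0 \<and> ((\<lambda>y. ln (f y)) has_derivative (\<lambda>h. s x \<bullet> h)) (at x))"

definition psd_kernel :: "('a \<Rightarrow> 'a \<Rightarrow> real) \<Rightarrow> bool" where
  "psd_kernel k \<longleftrightarrow> (\<forall>x y. k x y = k y x) \<and>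
     (\<forall>(n::nat) (xs::nat \<Rightarrow> 'a) (c::nat \<Rightarrow> real).
        (\<Sum>i<n. \<Sum>j<n. c i * c j * k (xs i) (xs j)) \<ge> 0)"

definition mix_marginal :: "('a::euclidean_space \<Rightarrow> 'b::euclidean_space \<Rightarrow> real) \<Rightarrow> ('b \<Rightarrow> real) \<Rightarrow> 'a \<Rightarrow> real" where
  "mix_marginal qc qz x = (\<integral>z. qc x z * qz z \<partial>lborel)"

definition mix_joint :: "('a::euclidean_space \<Rightarrow> 'b::euclidean_space \<Rightarrow> real) \<Rightarrow> ('b \<Rightarrow> real) \<Rightarrow> ('a \<times> 'b) measure" where
  "mix_joint qc qz = density (lborel \<Otimes>\<^sub>M lborel) (\<lambda>(x,z). ennreal (qc x z * qz z))"

definition KSD2 :: "'a::euclidean_space measure \<Rightarrow> ('a \<Rightarrow> 'a) \<Rightarrow> ('a \<Rightarrow> 'a) \<Rightarrow> ('a \<Rightarrow> 'a \<Rightarrow> real) \<Rightarrow> real" where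
  "KSD2 Q sq sp k = (\<integral>(x,y). (sp x - sq x) \<bullet> (k x y *\<^sub>R (sp y - sq y)) \<partial>(Q \<Otimes>\<^sub>M Q))"

definition stein_witness :: "'a::euclidean_space measure \<Rightarrow> ('a \<Rightarrow> 'a) \<Rightarrow> ('a \<Rightarrow> 'a) \<Rightarrow> ('a \<Rightarrow> 'a \<Rightarrow> real) \<Rightarrow> 'a \<Rightarrow> 'a" where
  "stein_witness Q sq sp k x = (\<integral>y. k x y *\<^sub>R (sp y - sq y) \<partial>Q)"

end

theory Submission
  imports Defs
begin

(* The key identity is the score of a mixture,
     q(y) s_q(y) = integral of q(y|z) q(z) s_{q(.|z)}(y) dz,
   obtained by differentiating q(y) = integral of q(y|z) q(z) dz under the integral sign in
   every direction: the local domination hypothesis bounds the difference quotients via the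
   mean value theorem, and dominated convergence applies.  Integrating out z therefore turns
   k(x,y) (s_p(y) - s_{q(.|z)}(y)) into k(x,y) (s_p(y) - s_q(y)) under q(y), which is the
   witness formula.  For the KSD, Fubini over the two joint draws reduces both sides to
   E_q[(s_p - s_q)(x) . f*(x)]; on the left this needs the KSD integrand to be integrable
   under q x q, which follows from the assumed integrability on the joint by Jensen's
   inequality in the latent variables. *)

lemma has_score_pos: "has_score f s \<Longrightarrow> f x > 0"
  unfolding has_score_def by blast

lemma has_score_DERIV_along_line:
  fixes f :: "'a::euclidean_space \<Rightarrow> real"
  assumes "has_score f s"
  shows "((\<lambda>t. f (y + t *\<^sub>R h)) has_real_derivative f (y + t *\<^sub>R h) * (s (y + t *\<^sub>R h) \<bullet> h)) (at t)"
proof -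
  let ?x = "y + t *\<^sub>R h"
  have "((\<lambda>y. ln (f y)) has_derivative (\<lambda>v. s ?x \<bullet> v)) (at ?x)"
    using assms unfolding has_score_def by blast
  moreover have "((\<lambda>t. y + t *\<^sub>R h) has_derivative (\<lambda>d. d *\<^sub>R h)) (at t)"
    by (auto intro!: derivative_eq_intros)
  ultimately have "((\<lambda>t. ln (f (y + t *\<^sub>R h))) has_derivative (\<lambda>d. s ?x \<bullet> (d *\<^sub>R h))) (at t)"
    using has_derivative_compose by fastforce
  then have "((\<lambda>t. ln (f (y + t *\<^sub>R h))) has_real_derivative (s ?x \<bullet> h)) (at t)"
    unfolding has_field_derivative_def by (simp add: mult_commute_abs)
  from DERIV_fun_exp[OF this] show ?thesis
    using has_score_pos[OF assms] by simp
qed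

lemma DERIV_LIMSEQ_difference_quotient:
  fixes F :: "real \<Rightarrow> real"
  assumes "(F has_real_derivative D) (at 0)" "\<And>n. t n \<noteq> 0" "t \<longlonglongrightarrow> 0"
  shows "(\<lambda>n. (F (t n) - F 0) / t n) \<longlonglongrightarrow> D"
proof -
  have "((\<lambda>h. (F h - F 0) / h) \<longlongrightarrow> D) (at 0)"
    using assms(1) unfolding DERIV_def by simp
  then show ?thesis
    using assms(2,3) unfolding LIMSEQ_SEQ_conv[symmetric] by blast
qed

lemma has_score_difference_quotient_bound:
  fixes f :: "'a::euclidean_space \<Rightarrow> real"
  assumes "has_score f s" "0 < t" "0 \<le> c"
    and bound: "\<And>u. 0 < u \<Longrightarrow> u < t \<Longrightarrow> f (y + u *\<^sub>R h) * norm (s (y + u *\<^sub>R h)) * c \<le> B"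
  shows "\<bar>(f (y + t *\<^sub>R h) - f y) / t * c\<bar> \<le> norm h * B"
proof -
  obtain u where u: "0 < u" "u < t"
    and mvt: "f (y + t *\<^sub>R h) - f y = t * (f (y + u *\<^sub>R h) * (s (y + u *\<^sub>R h) \<bullet> h))"
    using MVT2[OF \<open>0 < t\<close> has_score_DERIV_along_line[OF assms(1)], of y h] by auto
  let ?x = "y + u *\<^sub>R h"
  have "\<bar>(f (y + t *\<^sub>R h) - f y) / t * c\<bar> = f ?x * \<bar>s ?x \<bullet> h\<bar> * c"
    using mvt \<open>0 < t\<close> \<open>0 \<le> c\<close> has_score_pos[OF assms(1), of ?x] by (simp add: abs_mult)
  also have "\<dots> \<le> f ?x * (norm (s ?x) * norm h) * c"
    using \<open>0 \<le> c\<close> has_score_pos[OF assms(1), of ?x] Cauchy_Schwarz_ineq2[of "s ?x" h]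
    by (intro mult_right_mono mult_left_mono) auto
  also have "\<dots> \<le> norm h * B"
    using mult_left_mono[OF bound[OF u] norm_ge_zero[of h]] by (simp add: ac_simps)
  finally show ?thesis .
qed

lemma norm_inner_integrals_le_nn_integral:
  fixes a b :: "_ \<Rightarrow> 'c::{real_inner, banach, second_countable_topology}"
  assumes a: "integrable M a" and b: "integrable N b"
  shows "ennreal \<bar>integral\<^sup>L M a \<bullet> integral\<^sup>L N b\<bar> \<le> (\<integral>\<^sup>+z. \<integral>\<^sup>+z'. ennreal \<bar>a z \<bullet> b z'\<bar> \<partial>N \<partial>M)"
proof -
  have "integral\<^sup>L M a \<bullet> integral\<^sup>L N b = (\<integral>z. a z \<bullet> integral\<^sup>L N b \<partial>M)"
    using a by simp
  then have "ennreal \<bar>integral\<^sup>L M a \<bullet> integral\<^sup>L N b\<bar> \<le> (\<integral>\<^sup>+z. ennreal \<bar>a z \<bullet> integral\<^sup>L N b\<bar> \<partial>M)"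
    using integral_norm_bound_ennreal[of M "\<lambda>z. a z \<bullet> integral\<^sup>L N b"] a by simp
  also have "\<dots> \<le> (\<integral>\<^sup>+z. \<integral>\<^sup>+z'. ennreal \<bar>a z \<bullet> b z'\<bar> \<partial>N \<partial>M)"
  proof (intro nn_integral_mono)
    fix z
    have "a z \<bullet> integral\<^sup>L N b = (\<integral>z'. a z \<bullet> b z' \<partial>N)"
      using b by simp
    then show "ennreal \<bar>a z \<bullet> integral\<^sup>L N b\<bar> \<le> (\<integral>\<^sup>+z'. ennreal \<bar>a z \<bullet> b z'\<bar> \<partial>N)"
      using integral_norm_bound_ennreal[of N "\<lambda>z'. a z \<bullet> b z'"] b by simp
  qed
  finally show ?thesis .
qed

lemma nn_integral_pair_density:
  assumes [measurable]: "f \<in> borel_measurable M1" "g \<in> borel_measurable M2"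
    "F \<in> borel_measurable (M1 \<Otimes>\<^sub>M M2)"
    and "sigma_finite_measure M2" "sigma_finite_measure (density M2 g)"
  shows "(\<integral>\<^sup>+p. F p \<partial>(density M1 f \<Otimes>\<^sub>M density M2 g)) = (\<integral>\<^sup>+x. \<integral>\<^sup>+y. f x * g y * F (x,y) \<partial>M2 \<partial>M1)"
proof -
  have "density M1 f \<Otimes>\<^sub>M density M2 g = density (M1 \<Otimes>\<^sub>M M2) (\<lambda>p. f (fst p) * g (snd p))"
    using pair_measure_density[of f M1 g M2] assms by (simp add: case_prod_beta')
  then have "(\<integral>\<^sup>+p. F p \<partial>(density M1 f \<Otimes>\<^sub>M density M2 g))
      = (\<integral>\<^sup>+p. f (fst p) * g (snd p) * F p \<partial>(M1 \<Otimes>\<^sub>M M2))"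
    by (simp add: nn_integral_density)
  also have "\<dots> = (\<integral>\<^sup>+x. \<integral>\<^sup>+y. f x * g y * F (x,y) \<partial>M2 \<partial>M1)"
    by (subst sigma_finite_measure.nn_integral_fst[OF \<open>sigma_finite_measure M2\<close>, symmetric])
      (simp_all add: measurable_compose[OF measurable_fst] measurable_compose[OF measurable_snd])
  finally show ?thesis .
qed

locale score_mixture =
  fixes qc :: "'a::euclidean_space \<Rightarrow> 'b::euclidean_space \<Rightarrow> real"
    and qz :: "'b \<Rightarrow> real"
    and sc :: "'b \<Rightarrow> 'a \<Rightarrow> 'a"
    and sq :: "'a \<Rightarrow> 'a"
  assumes qz_nonneg: "\<And>z. qz z \<ge> 0"
    and qz_meas: "qz \<in> borel_measurable lborel"
    and qc_meas: "(\<lambda>(x,z). qc x z) \<in> borel_measurable (lborel \<Otimes>\<^sub>M lborel)"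
    and qc_score: "\<And>z. has_score (\<lambda>x. qc x z) (sc z)"
    and sc_meas: "(\<lambda>(x,z). sc z x) \<in> borel_measurable (lborel \<Otimes>\<^sub>M lborel)"
    and q_score: "has_score (mix_marginal qc qz) sq"
    and dom: "\<And>x. \<exists>e>0. \<exists>g. integrable lborel g \<and>
                 (\<forall>y\<in>ball x e. \<forall>z. qc y z * norm (sc z y) * qz z \<le> g z)"
begin

abbreviation "q \<equiv> mix_marginal qc qz"

lemma measurable_qc[measurable (raw)]:
  assumes "f \<in> borel_measurable M" "g \<in> borel_measurable M"
  shows "(\<lambda>p. qc (f p) (g p)) \<in> borel_measurable M"
proof -
  have "(\<lambda>p. (f p, g p)) \<in> measurable M (lborel \<Otimes>\<^sub>M lborel)" using assms by measurable
  from measurable_compose[OF this qc_meas] show ?thesis by simp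
qed

lemma measurable_sc[measurable (raw)]:
  assumes "f \<in> borel_measurable M" "g \<in> borel_measurable M"
  shows "(\<lambda>p. sc (g p) (f p)) \<in> borel_measurable M"
proof -
  have "(\<lambda>p. (f p, g p)) \<in> measurable M (lborel \<Otimes>\<^sub>M lborel)" using assms by measurable
  from measurable_compose[OF this sc_meas] show ?thesis by simp
qed

lemma measurable_qz[measurable (raw)]:
  "f \<in> borel_measurable M \<Longrightarrow> (\<lambda>p. qz (f p)) \<in> borel_measurable M"
  using measurable_compose qz_meas[unfolded measurable_lborel2] by blast

lemma qc_pos: "qc x z > 0"
  using has_score_pos[OF qc_score] .

lemma q_pos: "q x > 0"
  using has_score_pos[OF q_score] .

lemma mixture_weight_nonneg: "0 \<le> qc x z * qz z"
  using qc_pos[of x z] qz_nonneg[of z] by simp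

lemma integrable_mixture_weight: "integrable lborel (\<lambda>z. qc x z * qz z)"
proof (rule ccontr)
  assume "\<not> ?thesis"
  then have "q x = 0" unfolding mix_marginal_def by (rule not_integrable_integral_eq)
  with q_pos[of x] show False by simp
qed

lemma integrable_weighted_score: "integrable lborel (\<lambda>z. (qc x z * qz z) *\<^sub>R sc z x)"
proof -
  obtain e g where "e > 0" and g: "integrable lborel g"
    and bound: "\<And>y z. y \<in> ball x e \<Longrightarrow> qc y z * norm (sc z y) * qz z \<le> g z"
    using dom[of x] by blast
  have "norm ((qc x z * qz z) *\<^sub>R sc z x) \<le> norm (g z)" for z
    using bound[of x z] \<open>e > 0\<close> mixture_weight_nonneg[of x z] by (simp add: ac_simps)
  then show ?thesis
    by (intro Bochner_Integration.integrable_bound[OF g] AE_I2) (simp_all, measurable)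
qed

lemma inner_mixture_score:
  "(\<integral>z. (qc y z * qz z) *\<^sub>R sc z y \<partial>lborel) \<bullet> h = q y * (sq y \<bullet> h)"
proof -
  obtain e g where "e > 0" and g: "integrable lborel g"
    and bound: "\<And>y' z. y' \<in> ball y e \<Longrightarrow> qc y' z * norm (sc z y') * qz z \<le> g z"
    using dom[of y] by blast
  define c where "c = e / (norm h + 1)"
  have "norm h + 1 > 0"
    by (simp add: add_nonneg_pos)
  then have "c > 0" and c_small: "c * norm h < e"
    using \<open>e > 0\<close> by (simp_all add: c_def field_simps)
  define t where "t n = c / real (Suc n)" for n
  have t_pos: "t n > 0" and t_le: "t n \<le> c" for n
    using \<open>c > 0\<close> by (auto simp: t_def field_simps)
  have t_nz: "t n \<noteq> 0" for n
    using t_pos[of n] by simp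
  have "t \<longlonglongrightarrow> 0"
    unfolding t_def using LIMSEQ_Suc[OF lim_const_over_n[of c]] by simp
  define D where "D n z = (qc (y + t n *\<^sub>R h) z - qc y z) / t n * qz z" for n z
  have lim_integral: "(\<lambda>n. integral\<^sup>L lborel (D n)) \<longlonglongrightarrow> (\<integral>z. qc y z * (sc z y \<bullet> h) * qz z \<partial>lborel)"
  proof (rule integral_dominated_convergence[where w="\<lambda>z. norm h * g z"])
    show "(\<lambda>z. qc y z * (sc z y \<bullet> h) * qz z) \<in> borel_measurable lborel"
      and "\<And>n. D n \<in> borel_measurable lborel"
      unfolding D_def by measurable
    show "integrable lborel (\<lambda>z. norm h * g z)"
      using g by simp
    have "(\<lambda>n. (qc (y + t n *\<^sub>R h) z - qc y z) / t n) \<longlonglongrightarrow> qc y z * (sc z y \<bullet> h)" for z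
      using DERIV_LIMSEQ_difference_quotient[OF has_score_DERIV_along_line[OF qc_score[of z], of y h 0]
          t_nz \<open>t \<longlonglongrightarrow> 0\<close>] by simp
    then show "AE z in lborel. (\<lambda>n. D n z) \<longlonglongrightarrow> qc y z * (sc z y \<bullet> h) * qz z"
      unfolding D_def by (intro AE_I2 tendsto_mult_right)
    show "AE z in lborel. norm (D n z) \<le> norm h * g z" for n
    proof (intro AE_I2)
      fix z
      have "y + u *\<^sub>R h \<in> ball y e" if "0 < u" "u < t n" for u
      proof -
        have "dist y (y + u *\<^sub>R h) = u * norm h"
          using \<open>0 < u\<close> by (simp add: dist_norm)
        also have "\<dots> \<le> c * norm h"
          using that t_le[of n] by (intro mult_right_mono) auto
        finally show ?thesis
          using c_small by simp
      qed
      then show "norm (D n z) \<le> norm h * g z"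
        unfolding D_def real_norm_def
        by (intro has_score_difference_quotient_bound[OF qc_score t_pos qz_nonneg] bound)
    qed
  qed
  have integral_D: "integral\<^sup>L lborel (D n) = (q (y + t n *\<^sub>R h) - q y) / t n" for n
  proof -
    have "D n = (\<lambda>z. (qc (y + t n *\<^sub>R h) z * qz z - qc y z * qz z) / t n)"
      by (auto simp: D_def fun_eq_iff field_simps)
    then show ?thesis
      unfolding mix_marginal_def using integrable_mixture_weight by simp
  qed
  have lim_quotient: "(\<lambda>n. (q (y + t n *\<^sub>R h) - q y) / t n) \<longlonglongrightarrow> q y * (sq y \<bullet> h)"
    using DERIV_LIMSEQ_difference_quotient[OF has_score_DERIV_along_line[OF q_score, of y h 0]
        t_nz \<open>t \<longlonglongrightarrow> 0\<close>] by simp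
  have "(\<integral>z. qc y z * (sc z y \<bullet> h) * qz z \<partial>lborel) = q y * (sq y \<bullet> h)"
    using LIMSEQ_unique[OF lim_integral[unfolded integral_D] lim_quotient] .
  moreover have "(\<integral>z. (qc y z * qz z) *\<^sub>R sc z y \<partial>lborel) \<bullet> h
      = (\<integral>z. qc y z * (sc z y \<bullet> h) * qz z \<partial>lborel)"
    using integrable_weighted_score[of y] by (subst integral_inner_left[symmetric]) (auto simp: ac_simps)
  ultimately show ?thesis by simp
qed

text \<open>Dividing by q y: the score of the mixture is the posterior mean of the component scores.\<close>
lemma mixture_score: "(\<integral>z. (qc y z * qz z) *\<^sub>R sc z y \<partial>lborel) = q y *\<^sub>R sq y"
  by (subst vector_eq_rdot[symmetric]) (simp add: inner_mixture_score)

lemma integrable_weighted_score_difference: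
  "integrable lborel (\<lambda>z. (qc y z * qz z) *\<^sub>R (v - sc z y))"
  using integrable_weighted_score[of y] integrable_mixture_weight[of y]
  by (simp add: scaleR_diff_right)

lemma mixture_score_difference:
  "(\<integral>z. (qc y z * qz z) *\<^sub>R (v - sc z y) \<partial>lborel) = q y *\<^sub>R (v - sq y)"
  using integrable_weighted_score[of y] integrable_mixture_weight[of y]
  by (simp add: scaleR_diff_right mixture_score mix_marginal_def)

abbreviation "J \<equiv> mix_joint qc qz"
abbreviation "Q \<equiv> density lborel (\<lambda>x. ennreal (q x))"

lemma mix_joint_eq_density:
  "J = density (lborel \<Otimes>\<^sub>M lborel) (\<lambda>p. ennreal (qc (fst p) (snd p) * qz (snd p)))"
  unfolding mix_joint_def by (simp add: case_prod_beta')

lemma sets_mix_joint[measurable_cong]: "sets J = sets (lborel \<Otimes>\<^sub>M lborel)"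
  unfolding mix_joint_eq_density by simp

lemma sigma_finite_lborel_pair: "sigma_finite_measure (lborel \<Otimes>\<^sub>M lborel :: ('a \<times> 'b) measure)"
  by (intro sigma_finite_pair_measure lborel.sigma_finite_measure_axioms)

lemma sigma_finite_mix_joint: "sigma_finite_measure J"
  unfolding mix_joint_eq_density
  by (subst sigma_finite_measure.sigma_finite_iff_density_finite[OF sigma_finite_lborel_pair]) auto

lemma measurable_q[measurable (raw)]:
  "f \<in> borel_measurable M \<Longrightarrow> (\<lambda>p. q (f p)) \<in> borel_measurable M"
proof -
  have "(\<lambda>x. \<integral>z. qc x z * qz z \<partial>lborel) \<in> borel_measurable lborel"
    by measurable
  then have "q \<in> borel_measurable borel"
    unfolding mix_marginal_def[abs_def] by simp
  then show "f \<in> borel_measurable M \<Longrightarrow> (\<lambda>p. q (f p)) \<in> borel_measurable M"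
    using measurable_compose by blast
qed

lemma sigma_finite_Q: "sigma_finite_measure Q"
proof -
  have "(\<lambda>x. ennreal (q x)) \<in> borel_measurable borel"
    by measurable
  then show ?thesis
    by (subst sigma_finite_measure.sigma_finite_iff_density_finite[OF sigma_finite_lborel]) auto
qed

lemma integral_mix_joint_marginal:
  fixes H :: "'a \<times> 'b \<Rightarrow> 'c::{banach, second_countable_topology}"
  assumes H: "integrable J H" and [measurable]: "h \<in> borel_measurable borel"
    and marginal: "\<And>x. (\<integral>z. (qc x z * qz z) *\<^sub>R H (x,z) \<partial>lborel) = q x *\<^sub>R h x"
  shows "integrable Q h" and "integral\<^sup>L Q h = integral\<^sup>L J H"
proof -
  have [measurable]: "H \<in> borel_measurable (lborel \<Otimes>\<^sub>M lborel)"
    using borel_measurable_integrable[OF H] by (simp add: measurable_cong_sets[OF sets_mix_joint refl])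
  have weighted: "integrable (lborel \<Otimes>\<^sub>M lborel) (\<lambda>p. (qc (fst p) (snd p) * qz (snd p)) *\<^sub>R H p)"
    using H unfolding mix_joint_eq_density
    by (subst (asm) integrable_density) (auto simp: mixture_weight_nonneg)
  have "integrable lborel (\<lambda>x. q x *\<^sub>R h x)"
    using lborel_pair.integrable_fst'[OF weighted] by (simp add: marginal)
  then show "integrable Q h"
    by (subst integrable_density) (auto intro: less_imp_le[OF q_pos])
  have "integral\<^sup>L Q h = (\<integral>x. q x *\<^sub>R h x \<partial>lborel)"
    by (subst integral_density) (auto intro: less_imp_le[OF q_pos])
  also have "\<dots> = integral\<^sup>L (lborel \<Otimes>\<^sub>M lborel) (\<lambda>p. (qc (fst p) (snd p) * qz (snd p)) *\<^sub>R H p)"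
    using lborel_pair.integral_fst'[OF weighted] by (simp add: marginal)
  also have "\<dots> = integral\<^sup>L J H"
    unfolding mix_joint_eq_density by (subst integral_density) (auto simp: mixture_weight_nonneg)
  finally show "integral\<^sup>L Q h = integral\<^sup>L J H" .
qed

end

locale stein_mixture = score_mixture qc qz sc sq
  for qc :: "'a::euclidean_space \<Rightarrow> 'b::euclidean_space \<Rightarrow> real"
    and qz :: "'b \<Rightarrow> real"
    and sc :: "'b \<Rightarrow> 'a \<Rightarrow> 'a"
    and sq :: "'a \<Rightarrow> 'a" +
  fixes sp :: "'a \<Rightarrow> 'a" and k :: "'a \<Rightarrow> 'a \<Rightarrow> real"
  assumes sq_meas: "sq \<in> borel_measurable lborel"
    and sp_meas: "sp \<in> borel_measurable lborel"
    and k_meas: "(\<lambda>(x,y). k x y) \<in> borel_measurable (lborel \<Otimes>\<^sub>M lborel)"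
    and int_f: "\<And>x. integrable (mix_joint qc qz) (\<lambda>(y,z). k x y *\<^sub>R (sp y - sc z y))"
    and int_ksd: "integrable (mix_joint qc qz \<Otimes>\<^sub>M mix_joint qc qz)
                    (\<lambda>((x,z),(x',z')). k x x' * ((sp x - sc z x) \<bullet> (sp x' - sc z' x')))"
begin

lemma measurable_k[measurable (raw)]:
  assumes "f \<in> borel_measurable M" "g \<in> borel_measurable M"
  shows "(\<lambda>p. k (f p) (g p)) \<in> borel_measurable M"
proof -
  have "(\<lambda>p. (f p, g p)) \<in> measurable M (lborel \<Otimes>\<^sub>M lborel)" using assms by measurable
  from measurable_compose[OF this k_meas] show ?thesis by simp
qed

lemma measurable_sp[measurable (raw)]:
  "f \<in> borel_measurable M \<Longrightarrow> (\<lambda>p. sp (f p)) \<in> borel_measurable M"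
  using measurable_compose sp_meas[unfolded measurable_lborel2] by blast

lemma measurable_sq[measurable (raw)]:
  "f \<in> borel_measurable M \<Longrightarrow> (\<lambda>p. sq (f p)) \<in> borel_measurable M"
  using measurable_compose sq_meas[unfolded measurable_lborel2] by blast

abbreviation "W \<equiv> stein_witness Q sq sp k"

lemma stein_witness_mix_joint:
  shows "integrable Q (\<lambda>y. k x y *\<^sub>R (sp y - sq y))"
    and "W x = (\<integral>(y,z). k x y *\<^sub>R (sp y - sc z y) \<partial>J)"
proof -
  have "(\<integral>z. (qc y z * qz z) *\<^sub>R (case (y,z) of (y,z) \<Rightarrow> k x y *\<^sub>R (sp y - sc z y)) \<partial>lborel)
      = q y *\<^sub>R (k x y *\<^sub>R (sp y - sq y))" for y
  proof -
    have "(\<integral>z. (qc y z * qz z) *\<^sub>R (case (y,z) of (y,z) \<Rightarrow> k x y *\<^sub>R (sp y - sc z y)) \<partial>lborel)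
        = (\<integral>z. k x y *\<^sub>R ((qc y z * qz z) *\<^sub>R (sp y - sc z y)) \<partial>lborel)"
      by (simp add: ac_simps)
    also have "\<dots> = k x y *\<^sub>R (q y *\<^sub>R (sp y - sq y))"
      by (simp only: integral_scaleR_right mixture_score_difference)
    finally show ?thesis
      by (simp add: mult.commute)
  qed
  note marginal = integral_mix_joint_marginal[OF int_f _ this]
  have "(\<lambda>y. k x y *\<^sub>R (sp y - sq y)) \<in> borel_measurable borel"
    by measurable
  then show "integrable Q (\<lambda>y. k x y *\<^sub>R (sp y - sq y))"
    and "W x = (\<integral>(y,z). k x y *\<^sub>R (sp y - sc z y) \<partial>J)"
    unfolding stein_witness_def by (rule marginal(1), rule marginal(2))
qed

lemma measurable_W[measurable (raw)]:
  "f \<in> borel_measurable M \<Longrightarrow> (\<lambda>p. W (f p)) \<in> borel_measurable M"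
proof -
  interpret Q: sigma_finite_measure Q by (rule sigma_finite_Q)
  have "sets (lborel \<Otimes>\<^sub>M Q) = sets (lborel \<Otimes>\<^sub>M lborel)"
    by (intro sets_pair_measure_cong) auto
  then have "(\<lambda>(x,y). k x y *\<^sub>R (sp y - sq y)) \<in> borel_measurable (lborel \<Otimes>\<^sub>M Q)"
    by (subst measurable_cong_sets[OF _ refl]) (assumption, measurable)
  then have "W \<in> borel_measurable borel"
    unfolding stein_witness_def[abs_def] by (simp add: Q.borel_measurable_lebesgue_integral)
  then show "f \<in> borel_measurable M \<Longrightarrow> (\<lambda>p. W (f p)) \<in> borel_measurable M"
    using measurable_compose by blast
qed

abbreviation "ksd_integrand \<equiv> \<lambda>(x,y). (sp x - sq x) \<bullet> (k x y *\<^sub>R (sp y - sq y))"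
abbreviation "ksd_joint_integrand \<equiv>
  \<lambda>((x,z),(x',z')). k x x' * ((sp x - sc z x) \<bullet> (sp x' - sc z' x'))"

lemma measurable_ksd_joint_integrand[measurable]:
  "ksd_joint_integrand \<in> borel_measurable ((lborel \<Otimes>\<^sub>M lborel) \<Otimes>\<^sub>M (lborel \<Otimes>\<^sub>M lborel))"
proof -
  have "ksd_joint_integrand = (\<lambda>p. k (fst (fst p)) (fst (snd p))
      * ((sp (fst (fst p)) - sc (snd (fst p)) (fst (fst p))) \<bullet> (sp (fst (snd p)) - sc (snd (snd p)) (fst (snd p)))))"
    by (auto simp: fun_eq_iff)
  then show ?thesis
    by (simp only:) measurable
qed

lemma integral_ksd_joint_eq_witness:
  shows "integrable J (\<lambda>(x,z). (sp x - sc z x) \<bullet> W x)"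
    and "integral\<^sup>L (J \<Otimes>\<^sub>M J) ksd_joint_integrand = (\<integral>(x,z). (sp x - sc z x) \<bullet> W x \<partial>J)"
proof -
  interpret JJ: pair_sigma_finite J J
    by (intro pair_sigma_finite.intro sigma_finite_mix_joint)
  have inner: "(\<integral>p'. ksd_joint_integrand (p,p') \<partial>J) = (case p of (x,z) \<Rightarrow> (sp x - sc z x) \<bullet> W x)" for p
  proof (cases p)
    case (Pair x z)
    have "(\<integral>p'. ksd_joint_integrand (p,p') \<partial>J)
        = (\<integral>p'. (sp x - sc z x) \<bullet> (case p' of (x',z') \<Rightarrow> k x x' *\<^sub>R (sp x' - sc z' x')) \<partial>J)"
      unfolding Pair by (intro Bochner_Integration.integral_cong refl) (auto split: prod.splits)
    also have "\<dots> = (sp x - sc z x) \<bullet> W x"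
      using int_f[of x] by (simp add: stein_witness_mix_joint(2))
    finally show ?thesis
      unfolding Pair by simp
  qed
  show "integrable J (\<lambda>(x,z). (sp x - sc z x) \<bullet> W x)"
    using JJ.integrable_fst'[OF int_ksd] unfolding inner .
  show "integral\<^sup>L (J \<Otimes>\<^sub>M J) ksd_joint_integrand = (\<integral>(x,z). (sp x - sc z x) \<bullet> W x \<partial>J)"
    using JJ.integral_fst'[OF int_ksd] unfolding inner by simp
qed

lemma integral_mix_joint_witness:
  "(\<integral>(x,z). (sp x - sc z x) \<bullet> W x \<partial>J) = (\<integral>x. (sp x - sq x) \<bullet> W x \<partial>Q)"
proof -
  have "(\<integral>z. (qc x z * qz z) *\<^sub>R (case (x,z) of (x,z) \<Rightarrow> (sp x - sc z x) \<bullet> W x) \<partial>lborel)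
      = q x *\<^sub>R ((sp x - sq x) \<bullet> W x)" for x
  proof -
    have "(\<integral>z. (qc x z * qz z) *\<^sub>R (case (x,z) of (x,z) \<Rightarrow> (sp x - sc z x) \<bullet> W x) \<partial>lborel)
        = (\<integral>z. ((qc x z * qz z) *\<^sub>R (sp x - sc z x)) \<bullet> W x \<partial>lborel)"
      by simp
    also have "\<dots> = (\<integral>z. (qc x z * qz z) *\<^sub>R (sp x - sc z x) \<partial>lborel) \<bullet> W x"
      using integrable_weighted_score_difference by (rule integral_inner_left)
    finally show ?thesis
      by (simp add: mixture_score_difference)
  qed
  moreover have "(\<lambda>x. (sp x - sq x) \<bullet> W x) \<in> borel_measurable borel"
    by measurable
  ultimately show ?thesis
    using integral_mix_joint_marginal(2)[OF integral_ksd_joint_eq_witness(1)] by simp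
qed

text \<open>Jensen's inequality in the latent variables; it transfers integrability from the
  joint to q x q.\<close>
lemma ksd_integrand_bound:
  "ennreal (q x * q y * \<bar>ksd_integrand (x,y)\<bar>)
    \<le> (\<integral>\<^sup>+z. \<integral>\<^sup>+z'. ennreal (qc x z * qz z * (qc y z' * qz z') * \<bar>ksd_joint_integrand ((x,z),(y,z'))\<bar>)
          \<partial>lborel \<partial>lborel)"
proof -
  let ?a = "\<lambda>z. (qc x z * qz z) *\<^sub>R (sp x - sc z x)"
  let ?b = "\<lambda>z'. k x y *\<^sub>R ((qc y z' * qz z') *\<^sub>R (sp y - sc z' y))"
  have ia: "integrable lborel ?a"
    by (rule integrable_weighted_score_difference)
  have ib: "integrable lborel ?b"
    by (rule integrable_scaleR_right, rule integrable_weighted_score_difference)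
  have "integral\<^sup>L lborel ?a \<bullet> integral\<^sup>L lborel ?b
      = (q x *\<^sub>R (sp x - sq x)) \<bullet> (k x y *\<^sub>R (q y *\<^sub>R (sp y - sq y)))"
    by (simp only: integral_scaleR_right mixture_score_difference)
  also have "\<dots> = q x * q y * ksd_integrand (x,y)"
    by simp
  finally have "ennreal (q x * q y * \<bar>ksd_integrand (x,y)\<bar>)
      = ennreal \<bar>integral\<^sup>L lborel ?a \<bullet> integral\<^sup>L lborel ?b\<bar>"
    using q_pos[of x] q_pos[of y] by (simp add: abs_mult)
  also have "\<dots> \<le> (\<integral>\<^sup>+z. \<integral>\<^sup>+z'. ennreal \<bar>?a z \<bullet> ?b z'\<bar> \<partial>lborel \<partial>lborel)"
    by (rule norm_inner_integrals_le_nn_integral[OF ia ib])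
  also have "\<dots> = (\<integral>\<^sup>+z. \<integral>\<^sup>+z'. ennreal (qc x z * qz z * (qc y z' * qz z') * \<bar>ksd_joint_integrand ((x,z),(y,z'))\<bar>)
          \<partial>lborel \<partial>lborel)"
  proof (intro nn_integral_cong)
    fix z z'
    have "\<bar>?a z \<bullet> ?b z'\<bar> = \<bar>qc x z * qz z\<bar> * \<bar>qc y z' * qz z'\<bar> * \<bar>ksd_joint_integrand ((x,z),(y,z'))\<bar>"
      by (simp add: abs_mult)
    then show "ennreal \<bar>?a z \<bullet> ?b z'\<bar>
        = ennreal (qc x z * qz z * (qc y z' * qz z') * \<bar>ksd_joint_integrand ((x,z),(y,z'))\<bar>)"
      using mixture_weight_nonneg[of x z] mixture_weight_nonneg[of y z'] by simp
  qed
  finally show ?thesis .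
qed

lemma nn_integral_ksd_joint:
  "(\<integral>\<^sup>+p. ennreal \<bar>ksd_joint_integrand p\<bar> \<partial>(J \<Otimes>\<^sub>M J))
    = (\<integral>\<^sup>+x. \<integral>\<^sup>+z. \<integral>\<^sup>+y. \<integral>\<^sup>+z'.
        ennreal (qc x z * qz z * (qc y z' * qz z') * \<bar>ksd_joint_integrand ((x,z),(y,z'))\<bar>)
          \<partial>lborel \<partial>lborel \<partial>lborel \<partial>lborel)"
proof -
  define w where "w p = qc (fst p) (snd p) * qz (snd p)" for p :: "'a \<times> 'b"
  have [measurable]: "w \<in> borel_measurable (lborel \<Otimes>\<^sub>M lborel)"
    unfolding w_def by measurable
  have "(\<integral>\<^sup>+p. ennreal \<bar>ksd_joint_integrand p\<bar> \<partial>(J \<Otimes>\<^sub>M J))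
      = (\<integral>\<^sup>+p. \<integral>\<^sup>+p'. ennreal (w p) * ennreal (w p') * ennreal \<bar>ksd_joint_integrand (p,p')\<bar>
          \<partial>(lborel \<Otimes>\<^sub>M lborel) \<partial>(lborel \<Otimes>\<^sub>M lborel))"
    unfolding mix_joint_eq_density w_def[symmetric]
    using sigma_finite_lborel_pair sigma_finite_mix_joint[unfolded mix_joint_eq_density w_def[symmetric]]
    by (intro nn_integral_pair_density) measurable
  also have "\<dots> = (\<integral>\<^sup>+p. \<integral>\<^sup>+p'. ennreal (w p * w p' * \<bar>ksd_joint_integrand (p,p')\<bar>)
          \<partial>(lborel \<Otimes>\<^sub>M lborel) \<partial>(lborel \<Otimes>\<^sub>M lborel))"
    using mixture_weight_nonneg by (intro nn_integral_cong) (simp add: w_def ennreal_mult)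
  also have "\<dots> = (\<integral>\<^sup>+p. \<integral>\<^sup>+y. \<integral>\<^sup>+z'. ennreal (w p * w (y,z') * \<bar>ksd_joint_integrand (p,(y,z'))\<bar>)
          \<partial>lborel \<partial>lborel \<partial>(lborel \<Otimes>\<^sub>M lborel))"
  proof (intro nn_integral_cong)
    fix p
    have "(\<lambda>pp. ennreal (w (fst pp) * w (snd pp) * \<bar>ksd_joint_integrand pp\<bar>))
        \<in> borel_measurable ((lborel \<Otimes>\<^sub>M lborel) \<Otimes>\<^sub>M (lborel \<Otimes>\<^sub>M lborel))"
      by measurable
    then have "(\<lambda>p'. ennreal (w p * w p' * \<bar>ksd_joint_integrand (p,p')\<bar>)) \<in> borel_measurable (lborel \<Otimes>\<^sub>M lborel)"
      using measurable_compose[OF measurable_Pair1'] by (fastforce simp: space_pair_measure)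
    from lborel.nn_integral_fst[OF this]
    show "(\<integral>\<^sup>+p'. ennreal (w p * w p' * \<bar>ksd_joint_integrand (p,p')\<bar>) \<partial>(lborel \<Otimes>\<^sub>M lborel))
        = (\<integral>\<^sup>+y. \<integral>\<^sup>+z'. ennreal (w p * w (y,z') * \<bar>ksd_joint_integrand (p,(y,z'))\<bar>) \<partial>lborel \<partial>lborel)"
      by simp
  qed
  also have "\<dots> = (\<integral>\<^sup>+x. \<integral>\<^sup>+z. \<integral>\<^sup>+y. \<integral>\<^sup>+z'. ennreal (w (x,z) * w (y,z') * \<bar>ksd_joint_integrand ((x,z),(y,z'))\<bar>)
          \<partial>lborel \<partial>lborel \<partial>lborel \<partial>lborel)"
    by (rule lborel.nn_integral_fst[symmetric]) measurable
  finally show ?thesis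
    by (simp add: w_def)
qed

lemma integrable_ksd_integrand: "integrable (Q \<Otimes>\<^sub>M Q) ksd_integrand"
proof -
  have sets_QQ: "sets (Q \<Otimes>\<^sub>M Q) = sets (lborel \<Otimes>\<^sub>M lborel)"
    by (intro sets_pair_measure_cong) auto
  have [measurable]: "ksd_integrand \<in> borel_measurable (lborel \<Otimes>\<^sub>M lborel)"
    by measurable
  have "(\<integral>\<^sup>+p. ennreal \<bar>ksd_integrand p\<bar> \<partial>(Q \<Otimes>\<^sub>M Q))
      = (\<integral>\<^sup>+x. \<integral>\<^sup>+y. ennreal (q x * q y * \<bar>ksd_integrand (x,y)\<bar>) \<partial>lborel \<partial>lborel)"
  proof -
    have "(\<integral>\<^sup>+p. ennreal \<bar>ksd_integrand p\<bar> \<partial>(Q \<Otimes>\<^sub>M Q))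
        = (\<integral>\<^sup>+x. \<integral>\<^sup>+y. ennreal (q x) * ennreal (q y) * ennreal \<bar>ksd_integrand (x,y)\<bar> \<partial>lborel \<partial>lborel)"
      using sigma_finite_lborel sigma_finite_Q by (intro nn_integral_pair_density) (auto, measurable)
    also have "\<dots> = (\<integral>\<^sup>+x. \<integral>\<^sup>+y. ennreal (q x * q y * \<bar>ksd_integrand (x,y)\<bar>) \<partial>lborel \<partial>lborel)"
      using q_pos by (intro nn_integral_cong) (simp add: ennreal_mult less_imp_le)
    finally show ?thesis .
  qed
  also have "\<dots> \<le> (\<integral>\<^sup>+x. \<integral>\<^sup>+y. \<integral>\<^sup>+z. \<integral>\<^sup>+z'.
        ennreal (qc x z * qz z * (qc y z' * qz z') * \<bar>ksd_joint_integrand ((x,z),(y,z'))\<bar>)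
          \<partial>lborel \<partial>lborel \<partial>lborel \<partial>lborel)"
    by (intro nn_integral_mono ksd_integrand_bound)
  also have "\<dots> = (\<integral>\<^sup>+x. \<integral>\<^sup>+z. \<integral>\<^sup>+y. \<integral>\<^sup>+z'.
        ennreal (qc x z * qz z * (qc y z' * qz z') * \<bar>ksd_joint_integrand ((x,z),(y,z'))\<bar>)
          \<partial>lborel \<partial>lborel \<partial>lborel \<partial>lborel)"
    by (intro nn_integral_cong lborel_pair.Fubini') measurable
  also have "\<dots> = (\<integral>\<^sup>+p. ennreal \<bar>ksd_joint_integrand p\<bar> \<partial>(J \<Otimes>\<^sub>M J))"
    by (rule nn_integral_ksd_joint[symmetric])
  also have "\<dots> < \<infinity>"
    using int_ksd unfolding integrable_iff_bounded by simp
  finally show ?thesis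
    unfolding integrable_iff_bounded by (simp add: measurable_cong_sets[OF sets_QQ refl])
qed

lemma KSD2_eq_witness: "KSD2 Q sq sp k = (\<integral>x. (sp x - sq x) \<bullet> W x \<partial>Q)"
proof -
  interpret QQ: pair_sigma_finite Q Q
    by (intro pair_sigma_finite.intro sigma_finite_Q)
  have "KSD2 Q sq sp k = (\<integral>x. \<integral>y. (sp x - sq x) \<bullet> (k x y *\<^sub>R (sp y - sq y)) \<partial>Q \<partial>Q)"
    unfolding KSD2_def using QQ.integral_fst'[OF integrable_ksd_integrand] by simp
  also have "\<dots> = (\<integral>x. (sp x - sq x) \<bullet> W x \<partial>Q)"
    unfolding stein_witness_def
    by (intro Bochner_Integration.integral_cong refl integral_inner_right stein_witness_mix_joint(1))
  finally show ?thesis .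
qed

end

theorem proposition1:
  fixes qc :: "'a::euclidean_space \<Rightarrow> 'b::euclidean_space \<Rightarrow> real"
    and qz :: "'b \<Rightarrow> real"
    and sc :: "'b \<Rightarrow> 'a \<Rightarrow> 'a"
    and sq :: "'a \<Rightarrow> 'a"
    and p :: "'a \<Rightarrow> real"
    and sp :: "'a \<Rightarrow> 'a"
    and k :: "'a \<Rightarrow> 'a \<Rightarrow> real"
  assumes qz_nonneg: "\<And>z. qz z \<ge> 0"
    and qz_meas: "qz \<in> borel_measurable lborel"
    and qz_prob: "integrable lborel qz" "(\<integral>z. qz z \<partial>lborel) = 1"
    and qc_meas: "(\<lambda>(x,z). qc x z) \<in> borel_measurable (lborel \<Otimes>\<^sub>M lborel)"
    and qc_dens: "\<And>z. integrable lborel (\<lambda>x. qc x z) \<and> (\<integral>x. qc x z \<partial>lborel) = 1"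
    and qc_score: "\<And>z. has_score (\<lambda>x. qc x z) (sc z)"
    and sc_meas: "(\<lambda>(x,z). sc z x) \<in> borel_measurable (lborel \<Otimes>\<^sub>M lborel)"
    and q_score: "has_score (mix_marginal qc qz) sq"
    and sq_meas: "sq \<in> borel_measurable lborel"
    and p_dens: "p \<in> borel_measurable lborel" "integrable lborel p" "(\<integral>x. p x \<partial>lborel) = 1"
    and p_score: "has_score p sp"
    and sp_meas: "sp \<in> borel_measurable lborel"
    and k_cont: "continuous_on UNIV (\<lambda>(x,y). k x y)"
    and k_psd: "psd_kernel k"
    and dom: "\<And>x. \<exists>e>0. \<exists>g. integrable lborel g \<and>
                 (\<forall>y\<in>ball x e. \<forall>z. qc y z * norm (sc z y) * qz z \<le> g z)"
    and int_f: "\<And>x. integrable (mix_joint qc qz) (\<lambda>(y,z). k x y *\<^sub>R (sp y - sc z y))"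
    and int_ksd: "integrable (mix_joint qc qz \<Otimes>\<^sub>M mix_joint qc qz)
                    (\<lambda>((x,z),(x',z')). k x x' * ((sp x - sc z x) \<bullet> (sp x' - sc z' x')))"
  shows "(\<forall>x. stein_witness (density lborel (mix_marginal qc qz)) sq sp k x =
              (\<integral>(y,z). k x y *\<^sub>R (sp y - sc z y) \<partial>(mix_joint qc qz)))
         \<and> KSD2 (density lborel (mix_marginal qc qz)) sq sp k =
              (\<integral>((x,z),(x',z')). k x x' * ((sp x - sc z x) \<bullet> (sp x' - sc z' x'))
                  \<partial>(mix_joint qc qz \<Otimes>\<^sub>M mix_joint qc qz))"
proof -
  \<comment> \<open>Continuity of k only serves measurability.\<close>
  have "(\<lambda>(x,y). k x y) \<in> borel_measurable (lborel \<Otimes>\<^sub>M lborel)"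
    using borel_measurable_continuous_onI[OF k_cont] by (simp add: lborel_prod)
  then interpret stein_mixture qc qz sc sq sp k
    using assms by unfold_locales
  show ?thesis
    using stein_witness_mix_joint(2) KSD2_eq_witness integral_mix_joint_witness
      integral_ksd_joint_eq_witness(2)
    by simp
qed

end
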